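(* Let $\tau>0$, $M\in{\rm Sp}(2n,\mathbb{R})$ orthogonal symplectic, $\Lambda\subset\mathbb{R}$ an open interval, and $H:\Lambda\times\mathbb{R}^{2n}\to\mathbb{R}$ continuous with each $H_\lambda$ $M$-invariant, $C^2$, and all partial derivatives continuous in $\lambda$. Let $v_0:\mathbb{R}\to\mathbb{R}^{2n}$ be a nonconstant solution of $$\dot v(t)=J\nabla H_\lambda(v(t)),\quad v(t+\tau)=Mv(t)\ \forall t\in\mathbb{R}\qquad(\ast)$$ for each $\lambda\in\Lambda$. Suppose that for some $\mu\in\Lambda$ there exist $\lambda_k\in\Lambda$, $\lambda_k\to\mu$, and solutions $v_k$ of $(\ast)$ with $\lambda=\lambda_k$, pairwise $\mathbb{R}$-distinct, such that $v_k|_{[0,\tau]}\to v_0|_{[0,\tau]}$ in $W^{1,2}([0,\tau];\mathbb{R}^{2n})$. Then the problem $\dot v(t)=JH''_\mu(v_0(t))v(t)$, $v(t+\tau)=Mv(t)$ $\forall t$, has at least two linearly independent nontrivial solutions, i.e. $\dim{\rm Ker}(\gamma_\mu(\tau)-M)\ge2$, where $\gamma_\lambda$ is the fundamental matrix solution of $\dot Z=JH''_\lambda(v_0(t))Z$, $Z(0)=I_{2n}$.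
   Context: $J=\begin{pmatrix}0&-I_n\\ I_n&0\end{pmatrix}$; ${\rm Sp}(2n,\mathbb{R})=\{M:M^TJM=J\}$; $H_\lambda=H(\lambda,\cdot)$, $M$-invariant meaning $H_\lambda(Mz)=H_\lambda(z)$. Two solutions are $\mathbb{R}$-distinct if they do not lie in the same orbit $\{v(\theta+\cdot):\theta\in\mathbb{R}\}$. *)

theory Defs
  imports "HOL-Analysis.Analysis"
begin

text \<open>R^{2n} is rendered as (real^'n) \<times> (real^'n), z = (x, y).
  The standard complex structure J = [[0,-I],[I,0]] acts by J (x,y) = (-y, x).\<close>

definition Jsymp :: "((real^'n) \<times> (real^'n)) \<Rightarrow> ((real^'n) \<times> (real^'n))" where
  "Jsymp z = (- snd z, fst z)"

text \<open>M in Sp(2n,R): M linear and M^T J M = J, i.e. for all z w: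
  (M z) . J (M w) = z . J w.\<close>

definition symplectic :: "(((real^'n) \<times> (real^'n)) \<Rightarrow> ((real^'n) \<times> (real^'n))) \<Rightarrow> bool" where
  "symplectic M \<longleftrightarrow> linear M \<and> (\<forall>z w. M z \<bullet> Jsymp (M w) = z \<bullet> Jsymp w)"

definition R_distinct :: "(real \<Rightarrow> 'a) \<Rightarrow> (real \<Rightarrow> 'a) \<Rightarrow> bool" where
  "R_distinct u v \<longleftrightarrow> \<not> (\<exists>\<theta>::real. u = (\<lambda>t. v (\<theta> + t)))"

end

theory Submission
  imports Defs "HOL-Library.Periodic_Fun"
begin

text \<open>
  Write the equation as \<open>v' = F \<lambda> v\<close> with \<open>F \<lambda> = J \<nabla>H\<^sub>\<lambda>\<close>. Since \<open>M\<close> is orthogonal,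
  norms of quasi-periodic functions are \<open>\<tau>\<close>-periodic, so a Sobolev estimate on \<open>[0, \<tau>]\<close> turns
  the W^{1,2}-convergence \<open>v k \<rightarrow> v0\<close> into uniform convergence. As \<open>\<xi> = v0' 0 \<noteq> 0\<close>, the
  intermediate value theorem gives phases \<open>\<theta> k \<rightarrow> 0\<close> with \<open>v k (\<theta> k) - v0 0 \<bottom> \<xi>\<close>.
  Because \<open>v0\<close> solves every equation of the family, the differences
  \<open>u k = v k (\<theta> k + _) - v0\<close> solve \<open>u' = F (lam k) (v0 + u) - F (lam k) v0\<close>; by uniqueness
  \<open>u k 0 = 0\<close> would make \<open>v k\<close> a time shift of \<open>v0\<close>, which \<open>\<real>\<close>-distinctness allows for
  at most one \<open>k\<close>. The normalized differences \<open>u k / |u k 0|\<close> solve the linearized equation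
  \<open>z' = DF \<mu> (v0 t) z\<close> up to an error that is small relative to \<open>|z|\<close>, and Gronwall's
  inequality makes a subsequence converge uniformly to a solution \<open>w\<close> with \<open>|w 0| = 1\<close> and
  \<open>w 0 \<bottom> \<xi>\<close>. Differentiating the autonomous equation shows that \<open>v0' = F \<mu> v0\<close> is a
  second solution, independent of \<open>w\<close>.
\<close>

section \<open>Quasi-periodic functions\<close>

lemma quasi_periodic_norm_le:
  fixes u :: "real \<Rightarrow> 'a::euclidean_space"
  assumes M: "orthogonal_transformation M" and \<tau>: "\<tau> > 0"
    and per: "\<And>t. u (t + \<tau>) = M (u t)"
    and bound: "\<And>s. s \<in> {0..\<tau>} \<Longrightarrow> norm (u s) \<le> B"
  shows "norm (u t) \<le> B"
proof -
  interpret periodic_fun_simple "\<lambda>t. norm (u t)" \<tau>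
    by standard (simp add: per M orthogonal_transformation_norm)
  define m where "m = \<lfloor>t / \<tau>\<rfloor>"
  define s where "s = t - of_int m * \<tau>"
  have "of_int m \<le> t / \<tau>" "t / \<tau> < of_int m + 1"
    unfolding m_def by linarith+
  then have "of_int m * \<tau> \<le> t" "t < (of_int m + 1) * \<tau>"
    using \<tau> by (simp_all add: pos_le_divide_eq pos_divide_less_eq)
  then have "s \<in> {0..\<tau>}"
    unfolding s_def by (simp add: algebra_simps)
  moreover have "norm (u t) = norm (u s)"
    using plus_of_int[of s m] unfolding s_def by simp
  ultimately show ?thesis using bound by simp
qed

lemma quasi_periodic_bounded:
  fixes u :: "real \<Rightarrow> 'a::euclidean_space"
  assumes M: "orthogonal_transformation M" and \<tau>: "\<tau> > 0"
    and per: "\<And>t. u (t + \<tau>) = M (u t)" and cont: "continuous_on {0..\<tau>} u"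
  obtains B where "\<And>t. norm (u t) \<le> B"
proof -
  obtain B where "\<forall>y\<in>u ` {0..\<tau>}. norm y \<le> B"
    using compact_imp_bounded[OF compact_continuous_image[OF cont compact_Icc]]
    unfolding bounded_iff by blast
  then have "norm (u t) \<le> B" for t
    using quasi_periodic_norm_le[of M \<tau> u, OF M \<tau> per] by simp
  then show thesis by (rule that)
qed

lemma has_vector_derivative_shift:
  assumes "\<And>t. (y has_vector_derivative y' t) (at t)"
  shows "((\<lambda>t. y (\<theta> + t)) has_vector_derivative y' (\<theta> + t)) (at t)"
proof -
  have "((y \<circ> (\<lambda>t. \<theta> + t)) has_vector_derivative 1 *\<^sub>R y' (\<theta> + t)) (at t)"
    by (rule vector_diff_chain_at) (auto intro!: derivative_eq_intros assms)
  then show ?thesis by (simp add: o_def)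
qed

lemma quasi_periodic_vector_derivative:
  fixes y :: "real \<Rightarrow> 'a::euclidean_space"
  assumes "linear M" and der: "\<And>t. (y has_vector_derivative y' t) (at t)"
    and per: "\<And>t. y (t + \<tau>) = M (y t)"
  shows "y' (t + \<tau>) = M (y' t)"
proof -
  have "((\<lambda>t. y (\<tau> + t)) has_vector_derivative y' (\<tau> + t)) (at t)"
    using der by (rule has_vector_derivative_shift)
  moreover have "bounded_linear M"
    using \<open>linear M\<close> by (simp add: linear_conv_bounded_linear)
  then have "((\<lambda>t. M (y t)) has_vector_derivative M (y' t)) (at t)"
    by (rule bounded_linear.has_vector_derivative[OF _ der])
  moreover have "(\<lambda>t. y (\<tau> + t)) = (\<lambda>t. M (y t))"
    using per by (simp add: add.commute)
  ultimately show ?thesis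
    using vector_derivative_unique_at by (metis add.commute)
qed

section \<open>Elementary estimates\<close>

lemma norm_sq_has_vector_derivative:
  fixes u :: "real \<Rightarrow> 'a::real_inner"
  assumes "(u has_vector_derivative u') (at t)"
  shows "((\<lambda>s. (norm (u s))\<^sup>2) has_vector_derivative 2 * (u t \<bullet> u')) (at t)"
proof -
  have "((\<lambda>s. u s \<bullet> u s) has_derivative (\<lambda>h. u t \<bullet> (h *\<^sub>R u') + (h *\<^sub>R u') \<bullet> u t)) (at t)"
    using assms assms unfolding has_vector_derivative_def by (rule has_derivative_inner)
  then show ?thesis
    unfolding has_vector_derivative_def power2_norm_eq_inner
    by (simp add: inner_commute algebra_simps)
qed

lemma norm_diff_le_of_vector_derivative_bound:
  assumes "\<And>t. (y has_vector_derivative y' t) (at t)" and "\<And>t. norm (y' t) \<le> L"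
  shows "norm (y s - y t) \<le> L * \<bar>s - t\<bar>"
proof -
  have "norm (y s - y t) \<le> L * norm (s - t)"
  proof (rule differentiable_bound[of UNIV y "\<lambda>x h. h *\<^sub>R y' x"])
    show "(y has_derivative (\<lambda>h. h *\<^sub>R y' x)) (at x within UNIV)" for x
      using assms(1)[of x] unfolding has_vector_derivative_def by simp
    show "onorm (\<lambda>h. h *\<^sub>R y' x) \<le> L" for x
      using assms(2)[of x] by (simp add: onorm_scaleR_left onorm_id)
  qed auto
  then show ?thesis by simp
qed

lemma norm_diff_le_integral_of_derivative_bound:
  fixes g :: "real \<Rightarrow> 'b::banach"
  assumes der: "\<And>s. s \<in> {a..b} \<Longrightarrow> (g has_vector_derivative g' s) (at s)"
    and bound: "\<And>s. s \<in> {a..b} \<Longrightarrow> norm (g' s) \<le> h s" and h: "h integrable_on {a..b}"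
    and "x \<in> {a..b}" "y \<in> {a..b}"
  shows "norm (g y - g x) \<le> integral {a..b} h"
proof -
  have ordered: "norm (g q - g p) \<le> integral {a..b} h"
    if "p \<le> q" "p \<in> {a..b}" "q \<in> {a..b}" for p q
  proof -
    have sub: "{p..q} \<subseteq> {a..b}" using that by auto
    have I: "(g' has_integral g q - g p) {p..q}"
      using der sub by (intro fundamental_theorem_of_calculus[OF \<open>p \<le> q\<close>])
        (auto intro: has_vector_derivative_at_within)
    have "norm (integral {p..q} g') \<le> integral {p..q} h"
      using I integrable_on_subinterval[OF h sub] bound sub
      by (intro integral_norm_bound_integral) auto
    then have "norm (g q - g p) \<le> integral {p..q} h"
      using integral_unique[OF I] by simp
    also have "\<dots> \<le> integral {a..b} h"
      by (rule integral_subset_le[OF sub integrable_on_subinterval[OF h sub] h])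
        (meson bound norm_ge_zero order_trans)
    finally show ?thesis .
  qed
  show ?thesis
  proof (cases "x \<le> y")
    case True
    then show ?thesis using ordered assms(4,5) by blast
  next
    case False
    then have "norm (g x - g y) \<le> integral {a..b} h" using ordered assms(4,5) by simp
    then show ?thesis by (simp only: norm_minus_commute)
  qed
qed

lemma norm_blinfun_apply_le:
  assumes "norm f \<le> K"
  shows "norm (blinfun_apply f x) \<le> K * norm x"
  using norm_blinfun[of f x] mult_right_mono[OF assms norm_ge_zero] by (rule order_trans)

lemma continuous_on_Times_slice:
  assumes "continuous_on (\<Lambda> \<times> UNIV) (\<lambda>(l, x). f l x)" and "l \<in> \<Lambda>"
  shows "continuous_on UNIV (f l)"
proof -
  have "continuous_on UNIV ((\<lambda>(l, x). f l x) \<circ> (\<lambda>x. (l, x)))"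
    using assms by (intro continuous_on_compose continuous_intros) (auto elim: continuous_on_subset)
  then show ?thesis by (simp add: o_def)
qed

lemma continuous_on_norm_bounded_on_cball:
  fixes f :: "'a::euclidean_space \<Rightarrow> 'b::real_normed_vector"
  assumes "continuous_on UNIV f"
  obtains B where "\<And>x. norm x \<le> R \<Longrightarrow> norm (f x) \<le> B"
proof -
  have "bounded (f ` cball 0 R)"
    using assms by (intro compact_imp_bounded compact_continuous_image) (auto intro: continuous_on_subset)
  then obtain B where "\<forall>y\<in>f ` cball 0 R. norm y \<le> B"
    unfolding bounded_iff by blast
  then show thesis using that[of B] by simp
qed

lemma continuous_derivative_imp_lipschitz_on_cball:
  fixes f :: "'a::euclidean_space \<Rightarrow> 'b::real_normed_vector" and Df :: "'a \<Rightarrow> 'a \<Rightarrow>\<^sub>L 'b"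
  assumes "\<And>x. (f has_derivative blinfun_apply (Df x)) (at x)" and "continuous_on UNIV Df"
  obtains L where "L-lipschitz_on (cball 0 R) f"
proof -
  obtain B where "\<And>x. norm x \<le> R \<Longrightarrow> norm (Df x) \<le> B"
    using continuous_on_norm_bounded_on_cball[OF assms(2)] by blast
  then have "(max B 0)-lipschitz_on (cball 0 R) f"
    using assms(1) by (intro bounded_derivative_imp_lipschitz)
      (auto intro: has_derivative_at_withinI simp: norm_blinfun.rep_eq[symmetric] le_max_iff_disj)
  then show thesis by (rule that)
qed

section \<open>Gronwall estimates and uniqueness\<close>

lemma Gronwall_norm_sq:
  fixes \<phi> \<phi>' :: "real \<Rightarrow> 'a::real_inner"
  assumes der: "\<And>s. s \<in> {a..b} \<Longrightarrow> (\<phi> has_vector_derivative \<phi>' s) (at s)"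
    and bound: "\<And>s. s \<in> {a..b} \<Longrightarrow> norm (\<phi>' s) \<le> C * norm (\<phi> s) + D"
    and "C \<ge> 0" "D \<ge> 0" and t: "t \<in> {a..b}"
  shows "(norm (\<phi> t))\<^sup>2 \<le> exp ((2*C + 1) * (t - a)) * ((norm (\<phi> a))\<^sup>2 + D\<^sup>2)"
proof -
  define \<alpha> where "\<alpha> = 2*C + 1"
  define E where "E s = (norm (\<phi> s))\<^sup>2 + D\<^sup>2" for s
  define G where "G s = exp (- \<alpha> * (s - a)) * E s" for s
  have growth: "2 * (\<phi> s \<bullet> \<phi>' s) \<le> \<alpha> * E s" if "s \<in> {a..b}" for s
  proof -
    have "\<phi> s \<bullet> \<phi>' s \<le> norm (\<phi> s) * (C * norm (\<phi> s) + D)"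
      using norm_cauchy_schwarz[of "\<phi> s" "\<phi>' s"] mult_left_mono[OF bound[OF that] norm_ge_zero]
      by (rule order_trans)
    moreover have "2 * (norm (\<phi> s) * D) \<le> (norm (\<phi> s))\<^sup>2 + D\<^sup>2"
      using sum_squares_bound[of "norm (\<phi> s)" D] by (simp add: algebra_simps)
    moreover have "0 \<le> C * D\<^sup>2" using \<open>C \<ge> 0\<close> by simp
    ultimately show ?thesis
      unfolding \<alpha>_def E_def by (simp add: algebra_simps power2_eq_square)
  qed
  have "G t \<le> G a"
  proof (rule DERIV_nonpos_imp_nonincreasing[of a t G])
    fix s assume "a \<le> s" "s \<le> t"
    then have s: "s \<in> {a..b}" using t by simp
    have "(E has_real_derivative 2 * (\<phi> s \<bullet> \<phi>' s)) (at s)"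
      using norm_sq_has_vector_derivative[OF der[OF s]]
      unfolding E_def has_real_derivative_iff_has_vector_derivative has_vector_derivative_add_const .
    then have "(G has_real_derivative exp (- \<alpha> * (s - a)) * (2 * (\<phi> s \<bullet> \<phi>' s) - \<alpha> * E s)) (at s)"
      unfolding G_def by (auto intro!: derivative_eq_intros simp: algebra_simps)
    moreover have "exp (- \<alpha> * (s - a)) * (2 * (\<phi> s \<bullet> \<phi>' s) - \<alpha> * E s) \<le> 0"
      using growth[OF s] by (simp add: mult_nonneg_nonpos)
    ultimately show "\<exists>y. (G has_real_derivative y) (at s) \<and> y \<le> 0" by blast
  qed (use t in simp)
  then have "E t \<le> E a / exp (- \<alpha> * (t - a))"
    unfolding G_def by (simp add: pos_le_divide_eq mult.commute)
  then have "E t \<le> exp (\<alpha> * (t - a)) * E a"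
    by (simp add: exp_minus divide_inverse mult.commute)
  then show ?thesis
    unfolding \<alpha>_def E_def using zero_le_power2[of D] by linarith
qed

lemma linearly_bounded_derivative_zero:
  fixes \<phi> \<phi>' :: "real \<Rightarrow> 'a::real_inner"
  assumes der: "\<And>t. (\<phi> has_vector_derivative \<phi>' t) (at t)"
    and bound: "\<And>t. norm (\<phi>' t) \<le> L * norm (\<phi> t)" and "L \<ge> 0"
    and zero: "\<phi> t0 = 0"
  shows "\<phi> t = 0"
proof (cases "t0 \<le> t")
  case True
  have "(norm (\<phi> t))\<^sup>2 \<le> exp ((2*L + 1) * (t - t0)) * ((norm (\<phi> t0))\<^sup>2 + 0\<^sup>2)"
    by (rule Gronwall_norm_sq[of t0 t]) (use der bound \<open>L \<ge> 0\<close> True in auto)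
  then show ?thesis using zero by simp
next
  case False
  define \<psi> where "\<psi> s = \<phi> (- s)" for s
  have "((\<phi> \<circ> uminus) has_vector_derivative (-1) *\<^sub>R \<phi>' (- s)) (at s)" for s
    by (rule vector_diff_chain_at) (auto intro!: derivative_eq_intros der)
  then have der_\<psi>: "(\<psi> has_vector_derivative - \<phi>' (- s)) (at s)" for s
    unfolding \<psi>_def o_def by simp
  have "(norm (\<psi> (- t)))\<^sup>2 \<le> exp ((2*L + 1) * (- t - - t0)) * ((norm (\<psi> (- t0)))\<^sup>2 + 0\<^sup>2)"
    by (rule Gronwall_norm_sq[of "- t0" "- t" \<psi> "\<lambda>s. - \<phi>' (- s)", OF der_\<psi>])
      (use bound \<open>L \<ge> 0\<close> False in \<open>auto simp: \<psi>_def\<close>)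
  then show ?thesis using zero by (simp add: \<psi>_def)
qed

lemma quasi_periodic_Gronwall:
  fixes \<phi> \<phi>' :: "real \<Rightarrow> 'a::euclidean_space"
  assumes M: "orthogonal_transformation M" and \<tau>: "\<tau> > 0"
    and per: "\<And>t. \<phi> (t + \<tau>) = M (\<phi> t)"
    and der: "\<And>t. (\<phi> has_vector_derivative \<phi>' t) (at t)"
    and bound: "\<And>t. norm (\<phi>' t) \<le> C * norm (\<phi> t) + D" and "C \<ge> 0" "D \<ge> 0"
  shows "norm (\<phi> t) \<le> exp ((C + 1) * \<tau>) * (norm (\<phi> 0) + D)"
proof (rule quasi_periodic_norm_le[of M \<tau> \<phi>, OF M \<tau> per])
  fix s assume s: "s \<in> {0..\<tau>}"
  have "(norm (\<phi> s))\<^sup>2 \<le> exp ((2*C + 1) * (s - 0)) * ((norm (\<phi> 0))\<^sup>2 + D\<^sup>2)"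
    by (rule Gronwall_norm_sq[OF der bound \<open>C \<ge> 0\<close> \<open>D \<ge> 0\<close> s])
  also have "\<dots> \<le> (exp ((C + 1) * \<tau>))\<^sup>2 * (norm (\<phi> 0) + D)\<^sup>2"
  proof (rule mult_mono)
    have "(2*C + 1) * s \<le> (2*C + 1) * \<tau>"
      using s \<open>C \<ge> 0\<close> by (intro mult_left_mono) auto
    then show "exp ((2*C + 1) * (s - 0)) \<le> (exp ((C + 1) * \<tau>))\<^sup>2"
      using \<tau> by (simp add: exp_double[symmetric] algebra_simps)
    show "(norm (\<phi> 0))\<^sup>2 + D\<^sup>2 \<le> (norm (\<phi> 0) + D)\<^sup>2"
      using \<open>D \<ge> 0\<close> by (simp add: power2_sum)
  qed auto
  finally have "(norm (\<phi> s))\<^sup>2 \<le> (exp ((C + 1) * \<tau>) * (norm (\<phi> 0) + D))\<^sup>2"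
    by (simp add: power_mult_distrib)
  then show "norm (\<phi> s) \<le> exp ((C + 1) * \<tau>) * (norm (\<phi> 0) + D)"
    by (rule power2_le_imp_le) (simp add: \<open>D \<ge> 0\<close>)
qed

lemma autonomous_ode_solution_unique:
  fixes f :: "'a::euclidean_space \<Rightarrow> 'a" and Df :: "'a \<Rightarrow> 'a \<Rightarrow>\<^sub>L 'a"
  assumes "\<And>x. (f has_derivative blinfun_apply (Df x)) (at x)" and "continuous_on UNIV Df"
    and y: "\<And>t. (y has_vector_derivative f (y t)) (at t)"
    and z: "\<And>t. (z has_vector_derivative f (z t)) (at t)"
    and bounded: "\<And>t. norm (y t) \<le> R" "\<And>t. norm (z t) \<le> R"
    and "y t0 = z t0"
  shows "y t = z t"
proof -
  obtain L where L: "L-lipschitz_on (cball 0 R) f"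
    using continuous_derivative_imp_lipschitz_on_cball[OF assms(1,2)] .
  have der: "((\<lambda>t. y t - z t) has_vector_derivative f (y t) - f (z t)) (at t)" for t
    using y z by (rule has_vector_derivative_diff)
  have bound: "norm (f (y t) - f (z t)) \<le> L * norm (y t - z t)" for t
    using lipschitz_on_normD[OF L] bounded by simp
  have "y t - z t = 0"
    using linearly_bounded_derivative_zero[where \<phi> = "\<lambda>t. y t - z t", OF der bound
        lipschitz_on_nonneg[OF L]] \<open>y t0 = z t0\<close>
    by simp
  then show ?thesis by simp
qed

lemma nonconstant_solution_field_nonzero:
  fixes f :: "'a::euclidean_space \<Rightarrow> 'a" and Df :: "'a \<Rightarrow> 'a \<Rightarrow>\<^sub>L 'a"
  assumes "\<And>x. (f has_derivative blinfun_apply (Df x)) (at x)" and "continuous_on UNIV Df"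
    and y: "\<And>t. (y has_vector_derivative f (y t)) (at t)" and bounded: "\<And>t. norm (y t) \<le> R"
    and nonconst: "\<exists>s t. y s \<noteq> y t"
  shows "f (y t0) \<noteq> 0"
proof
  assume "f (y t0) = 0"
  then have "((\<lambda>_. y t0) has_vector_derivative f ((\<lambda>_. y t0) t)) (at t)" for t
    by (simp add: has_vector_derivative_const)
  then have "y t = y t0" for t
    using autonomous_ode_solution_unique[OF assms(1,2) y _ bounded] bounded[of t0] by blast
  then show False using nonconst by metis
qed

lemma solution_derivative_solves_variational_equation:
  assumes "\<And>x. (f has_derivative blinfun_apply (Df x)) (at x)"
    and "\<And>t. (y has_vector_derivative f (y t)) (at t)"
  shows "((\<lambda>t. f (y t)) has_vector_derivative Df (y t) (f (y t))) (at t)"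
proof -
  have "((f \<circ> y) has_derivative (blinfun_apply (Df (y t)) \<circ> (\<lambda>h. h *\<^sub>R f (y t)))) (at t)"
    using assms(2)[of t] unfolding has_vector_derivative_def by (rule diff_chain_at[OF _ assms(1)])
  then show ?thesis
    unfolding has_vector_derivative_def by (simp add: o_def blinfun.scaleR_right)
qed

section \<open>A Sobolev estimate\<close>

lemma Sobolev_sup_norm_sq_le:
  fixes u u' :: "real \<Rightarrow> 'a::real_inner"
  assumes \<tau>: "\<tau> > 0"
    and der: "\<And>s. s \<in> {0..\<tau>} \<Longrightarrow> (u has_vector_derivative u' s) (at s)"
    and cont: "continuous_on {0..\<tau>} u'" and t: "t \<in> {0..\<tau>}"
  shows "(norm (u t))\<^sup>2 \<le> (1/\<tau> + 1) *
           (integral {0..\<tau>} (\<lambda>s. (norm (u s))\<^sup>2) + integral {0..\<tau>} (\<lambda>s. (norm (u' s))\<^sup>2))"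
proof -
  define g where "g s = (norm (u s))\<^sup>2" for s
  define g' where "g' s = (norm (u' s))\<^sup>2" for s
  have "continuous_on {0..\<tau>} u"
    using der by (intro continuous_at_imp_continuous_on ballI has_vector_derivative_continuous) auto
  then have g: "continuous_on {0..\<tau>} g" and g': "continuous_on {0..\<tau>} g'"
    unfolding g_def g'_def using cont by (auto intro!: continuous_intros)
  have osc: "g t - g s \<le> integral {0..\<tau>} (\<lambda>s. g s + g' s)" if s: "s \<in> {0..\<tau>}" for s
  proof -
    have "norm (g t - g s) \<le> integral {0..\<tau>} (\<lambda>s. g s + g' s)"
    proof (rule norm_diff_le_integral_of_derivative_bound[OF _ _ _ s t])
      fix r assume "r \<in> {0..\<tau>}"
      then show "(g has_vector_derivative 2 * (u r \<bullet> u' r)) (at r)"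
        unfolding g_def by (intro norm_sq_has_vector_derivative der)
      have "2 * (norm (u r) * norm (u' r)) \<le> g r + g' r"
        using sum_squares_bound[of "norm (u r)" "norm (u' r)"]
        unfolding g_def g'_def by (simp add: algebra_simps)
      then show "norm (2 * (u r \<bullet> u' r)) \<le> g r + g' r"
        using Cauchy_Schwarz_ineq2[of "u r" "u' r"] by simp
    next
      show "(\<lambda>s. g s + g' s) integrable_on {0..\<tau>}"
        using g g' by (intro integrable_continuous_interval continuous_intros)
    qed
    then show ?thesis by simp
  qed
  obtain s where s: "s \<in> {0..\<tau>}" and min: "\<And>r. r \<in> {0..\<tau>} \<Longrightarrow> g s \<le> g r"
    using continuous_attains_inf[OF compact_Icc _ g] \<tau> by fastforce
  have "\<tau> * g s \<le> integral {0..\<tau>} g"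
    using integral_le[of "\<lambda>_. g s" "{0..\<tau>}" g] min \<tau> integrable_continuous_interval[OF g]
    by (simp add: integrable_const_ivl)
  then have "g s \<le> integral {0..\<tau>} g / \<tau>"
    using \<tau> by (simp add: pos_le_divide_eq mult.commute)
  moreover have "integral {0..\<tau>} (\<lambda>s. g s + g' s) = integral {0..\<tau>} g + integral {0..\<tau>} g'"
    using g g' by (intro integral_add integrable_continuous_interval)
  ultimately have "g t \<le> integral {0..\<tau>} g / \<tau> + (integral {0..\<tau>} g + integral {0..\<tau>} g')"
    using osc[OF s] by linarith
  also have "\<dots> \<le> (1/\<tau> + 1) * (integral {0..\<tau>} g + integral {0..\<tau>} g')"
    using integral_nonneg[OF integrable_continuous_interval[OF g']] \<tau>
    by (simp add: g'_def field_simps)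
  finally show ?thesis unfolding g_def g'_def .
qed

lemma W12_convergence_imp_uniform_convergence:
  fixes v :: "nat \<Rightarrow> real \<Rightarrow> 'a::euclidean_space" and v0 :: "real \<Rightarrow> 'a"
  assumes M: "orthogonal_transformation M" and \<tau>: "\<tau> > 0"
    and v: "\<And>k t. (v k has_vector_derivative v' k t) (at t)" "\<And>k. continuous_on UNIV (v' k)"
      "\<And>k t. v k (t + \<tau>) = M (v k t)"
    and v0: "\<And>t. (v0 has_vector_derivative v0' t) (at t)" "continuous_on UNIV v0'"
      "\<And>t. v0 (t + \<tau>) = M (v0 t)"
    and conv: "(\<lambda>k. integral {0..\<tau>} (\<lambda>t. (norm (v k t - v0 t))\<^sup>2)
                   + integral {0..\<tau>} (\<lambda>t. (norm (vector_derivative (v k) (at t)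
                                                 - vector_derivative v0 (at t)))\<^sup>2)) \<longlonglongrightarrow> 0"
  obtains e where "e \<longlonglongrightarrow> 0" "\<And>k t. norm (v k t - v0 t) \<le> e k"
proof
  define S where "S k = integral {0..\<tau>} (\<lambda>t. (norm (v k t - v0 t))\<^sup>2)
     + integral {0..\<tau>} (\<lambda>t. (norm (vector_derivative (v k) (at t) - vector_derivative v0 (at t)))\<^sup>2)"
    for k
  show "(\<lambda>k. sqrt ((1/\<tau> + 1) * S k)) \<longlonglongrightarrow> 0"
    using tendsto_real_sqrt[OF tendsto_mult_right_zero[OF conv[folded S_def]]] by simp
  fix k t
  have "S k = integral {0..\<tau>} (\<lambda>t. (norm (v k t - v0 t))\<^sup>2)
     + integral {0..\<tau>} (\<lambda>t. (norm (v' k t - v0' t))\<^sup>2)"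
    unfolding S_def using vector_derivative_at[OF v(1)] vector_derivative_at[OF v0(1)] by simp
  then have "(norm (v k s - v0 s))\<^sup>2 \<le> (1/\<tau> + 1) * S k" if "s \<in> {0..\<tau>}" for s
    using v(2) v0(2) by (auto intro!: Sobolev_sup_norm_sq_le[OF \<tau> _ _ that]
        has_vector_derivative_diff v(1) v0(1) continuous_on_subset[OF continuous_on_diff])
  moreover have "v k (t + \<tau>) - v0 (t + \<tau>) = M (v k t - v0 t)" for t
    using v(3) v0(3) linear_diff[OF orthogonal_transformation_linear[OF M]] by simp
  ultimately show "norm (v k t - v0 t) \<le> sqrt ((1/\<tau> + 1) * S k)"
    using quasi_periodic_norm_le[of M \<tau> "\<lambda>t. v k t - v0 t", OF M \<tau>] real_le_rsqrt
    by blast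
qed

section \<open>Limits of approximate solutions of linear equations\<close>

lemma approximate_linear_ode_solutions_limit:
  fixes A :: "real \<Rightarrow> 'a::euclidean_space \<Rightarrow>\<^sub>L 'a" and y q :: "nat \<Rightarrow> real \<Rightarrow> 'a"
  assumes A: "\<And>t. norm (A t) \<le> K"
    and der: "\<And>k t. (y k has_vector_derivative A t (y k t) + q k t) (at t)"
    and y_lim: "uniform_limit UNIV y g sequentially"
    and q_lim: "uniform_limit UNIV q (\<lambda>_. 0) sequentially"
  shows "(g has_vector_derivative A t (g t)) (at t)"
proof -
  have K: "K \<ge> 0" using A[of 0] norm_ge_zero order_trans by blast
  have close: "\<forall>\<^sub>F k in sequentially. \<forall>x\<in>UNIV. \<forall>h.
      norm (h *\<^sub>R (A x (y k x) + q k x) - h *\<^sub>R A x (g x)) \<le> e * norm h" if "e > 0" for e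
  proof -
    have "\<forall>\<^sub>F k in sequentially. \<forall>x. dist (y k x) (g x) < e / (2 * (K + 1))"
      using y_lim \<open>e > 0\<close> K unfolding uniform_limit_iff by simp
    moreover have "\<forall>\<^sub>F k in sequentially. \<forall>x. norm (q k x) < e / 2"
      using q_lim[unfolded uniform_limit_iff, rule_format, of "e / 2"] \<open>e > 0\<close> by simp
    ultimately show ?thesis
    proof eventually_elim
      case (elim k)
      have "norm (A x (y k x) + q k x - A x (g x)) \<le> e" for x
      proof -
        have "norm (A x (y k x - g x)) \<le> K * norm (y k x - g x)"
          using A by (rule norm_blinfun_apply_le)
        also have "\<dots> \<le> (K + 1) * (e / (2 * (K + 1)))"
          using elim(1)[rule_format, of x] K by (intro mult_mono) (auto simp: dist_norm)
        also have "\<dots> = e / 2"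
          using K by (simp add: field_simps)
        finally have "norm (A x (y k x - g x)) \<le> e / 2" .
        then show ?thesis
          using elim(2)[rule_format, of x] norm_triangle_ineq[of "A x (y k x - g x)" "q k x"]
          by (simp add: blinfun.diff_right algebra_simps)
      qed
      then show ?case
        by (simp add: scaleR_diff_right[symmetric] mult.commute[of e] mult_left_mono)
    qed
  qed
  obtain g2 where g2: "\<And>x. (\<lambda>k. y k x) \<longlonglongrightarrow> g2 x"
    "\<And>x. (g2 has_derivative (\<lambda>h. h *\<^sub>R A x (g x))) (at x)"
    using has_derivative_sequence[of UNIV y "\<lambda>k x h. h *\<^sub>R (A x (y k x) + q k x)"
        "\<lambda>x h. h *\<^sub>R A x (g x)", OF _ _ close, of 0 "g 0"]
      der tendsto_uniform_limitI[OF y_lim] unfolding has_vector_derivative_def by fastforce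
  have "g2 = g" using g2(1) tendsto_uniform_limitI[OF y_lim] LIMSEQ_unique by blast
  then show ?thesis using g2(2) unfolding has_vector_derivative_def by simp
qed

lemma approximate_linear_ode_solutions_uniformly_Cauchy:
  fixes A :: "real \<Rightarrow> 'a::euclidean_space \<Rightarrow>\<^sub>L 'a" and y q :: "nat \<Rightarrow> real \<Rightarrow> 'a"
  assumes M: "orthogonal_transformation M" and \<tau>: "\<tau> > 0" and A: "\<And>t. norm (A t) \<le> K"
    and der: "\<And>k t. (y k has_vector_derivative A t (y k t) + q k t) (at t)"
    and per: "\<And>k t. y k (t + \<tau>) = M (y k t)"
    and y0: "convergent (\<lambda>k. y k 0)"
    and q_lim: "uniform_limit UNIV q (\<lambda>_. 0) sequentially"
  shows "uniformly_Cauchy_on UNIV y"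
  unfolding uniformly_Cauchy_on_def
proof (intro allI impI)
  fix e :: real assume "e > 0"
  have K: "K \<ge> 0" using A[of 0] norm_ge_zero order_trans by blast
  define c where "c = exp ((K + 1) * \<tau>)"
  define \<delta> where "\<delta> = e / (3 * c)"
  have "\<delta> > 0" unfolding \<delta>_def c_def using \<open>e > 0\<close> by simp
  obtain N1 where N1: "\<And>m n. m \<ge> N1 \<Longrightarrow> n \<ge> N1 \<Longrightarrow> dist (y m 0) (y n 0) < \<delta>"
    using convergent_Cauchy[OF y0] \<open>\<delta> > 0\<close> unfolding Cauchy_def by blast
  obtain N2 where N2: "\<And>n t. n \<ge> N2 \<Longrightarrow> norm (q n t) < \<delta>"
    using q_lim \<open>\<delta> > 0\<close> unfolding uniform_limit_sequentially_iff by fastforce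
  have "dist (y m t) (y n t) < e" if "m \<ge> max N1 N2" "n \<ge> max N1 N2" for m n t
  proof -
    define d where "d t = y m t - y n t" for t
    have d_der: "(d has_vector_derivative A t (d t) + (q m t - q n t)) (at t)" for t
      using has_vector_derivative_diff[OF der[of m t] der[of n t]]
      unfolding d_def by (simp add: blinfun.diff_right algebra_simps)
    have "norm (A t (d t) + (q m t - q n t)) \<le> K * norm (d t) + 2 * \<delta>" for t
    proof -
      have "norm (A t (d t)) \<le> K * norm (d t)"
        using A by (rule norm_blinfun_apply_le)
      moreover have "norm (q m t - q n t) \<le> 2 * \<delta>"
        using N2[of m t] N2[of n t] that norm_triangle_ineq4[of "q m t" "q n t"] by simp
      ultimately show ?thesis by (meson add_mono norm_triangle_le)
    qed
    moreover have "d (t + \<tau>) = M (d t)" for t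
      unfolding d_def using per linear_diff[OF orthogonal_transformation_linear[OF M]] by simp
    ultimately have "norm (d t) \<le> c * (norm (d 0) + 2 * \<delta>)"
      unfolding c_def using K \<open>\<delta> > 0\<close> by (intro quasi_periodic_Gronwall[OF M \<tau> _ d_der]) auto
    also have "\<dots> < c * (3 * \<delta>)"
      using N1[of m n] that unfolding c_def d_def by (simp add: dist_norm)
    finally show ?thesis unfolding d_def \<delta>_def c_def by (simp add: dist_norm)
  qed
  then show "\<exists>N. \<forall>t\<in>UNIV. \<forall>m\<ge>N. \<forall>n\<ge>N. dist (y m t) (y n t) < e" by blast
qed

lemma relatively_small_perturbation_uniform_limit:
  fixes A :: "real \<Rightarrow> 'a::euclidean_space \<Rightarrow>\<^sub>L 'a" and z r :: "nat \<Rightarrow> real \<Rightarrow> 'a"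
  assumes M: "orthogonal_transformation M" and \<tau>: "\<tau> > 0" and A: "\<And>t. norm (A t) \<le> K"
    and der: "\<And>k t. (z k has_vector_derivative A t (z k t) + r k t) (at t)"
    and per: "\<And>k t. z k (t + \<tau>) = M (z k t)"
    and unit: "\<And>k. norm (z k 0) = 1"
    and small: "\<And>\<eta>. \<eta> > 0 \<Longrightarrow> \<forall>\<^sub>F k in sequentially. \<forall>t. norm (r k t) \<le> \<eta> * norm (z k t)"
  shows "uniform_limit UNIV r (\<lambda>_. 0) sequentially"
proof -
  have K: "K \<ge> 0" using A[of 0] norm_ge_zero order_trans by blast
  define W where "W = exp ((K + 1 + 1) * \<tau>)"
  have "W > 0" unfolding W_def by simp
  have bounded: "\<forall>\<^sub>F k in sequentially. \<forall>t. norm (z k t) \<le> W"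
    using small[OF zero_less_one]
  proof eventually_elim
    case (elim k)
    have "norm (A t (z k t) + r k t) \<le> (K + 1) * norm (z k t) + 0" for t
    proof -
      have "norm (A t (z k t)) \<le> K * norm (z k t)"
        using A by (rule norm_blinfun_apply_le)
      then show ?thesis
        using elim[rule_format, of t] norm_triangle_ineq[of "A t (z k t)" "r k t"]
        by (simp add: algebra_simps)
    qed
    then show ?case
      using quasi_periodic_Gronwall[OF M \<tau> per der, where C = "K + 1" and D = 0] K unit unfolding W_def by simp
  qed
  show ?thesis
    unfolding uniform_limit_iff
  proof (intro allI impI)
    fix e :: real assume "e > 0"
    then have "e / (2 * W) > 0" using \<open>W > 0\<close> by simp
    from bounded small[OF this] show "\<forall>\<^sub>F k in sequentially. \<forall>t\<in>UNIV. dist (r k t) 0 < e"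
    proof eventually_elim
      case (elim k)
      have "norm (r k t) < e" for t
      proof -
        have "norm (r k t) \<le> e / (2 * W) * W"
          using elim(2)[rule_format, of t] elim(1)[rule_format, of t] \<open>e / (2 * W) > 0\<close>
          by (meson mult_left_mono less_imp_le order_trans)
        also have "\<dots> < e" using \<open>W > 0\<close> \<open>e > 0\<close> by simp
        finally show ?thesis .
      qed
      then show ?case by simp
    qed
  qed
qed

lemma normalized_approximate_solutions_converge:
  fixes A :: "real \<Rightarrow> 'a::euclidean_space \<Rightarrow>\<^sub>L 'a" and z r :: "nat \<Rightarrow> real \<Rightarrow> 'a"
  assumes M: "orthogonal_transformation M" and \<tau>: "\<tau> > 0" and A: "\<And>t. norm (A t) \<le> K"
    and der: "\<And>k t. (z k has_vector_derivative A t (z k t) + r k t) (at t)"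
    and per: "\<And>k t. z k (t + \<tau>) = M (z k t)"
    and unit: "\<And>k. norm (z k 0) = 1"
    and small: "\<And>\<eta>. \<eta> > 0 \<Longrightarrow> \<forall>\<^sub>F k in sequentially. \<forall>t. norm (r k t) \<le> \<eta> * norm (z k t)"
  obtains s w where "strict_mono s" "(\<lambda>k. z (s k) 0) \<longlonglongrightarrow> w 0"
    "\<And>t. (w has_vector_derivative A t (w t)) (at t)" "\<And>t. w (t + \<tau>) = M (w t)"
proof -
  obtain l s where s: "strict_mono s" and "((\<lambda>k. z k 0) \<circ> s) \<longlonglongrightarrow> l"
    using compact_imp_seq_compact[OF compact_sphere, of 0 1] unit
    unfolding seq_compact_def by (metis mem_sphere_0)
  then have z0: "convergent (\<lambda>k. z (s k) 0)"
    unfolding convergent_def o_def by blast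
  have r_lim: "uniform_limit UNIV (\<lambda>k. r (s k)) (\<lambda>_. 0) sequentially"
    using filterlim_compose[OF relatively_small_perturbation_uniform_limit[OF assms]
        filterlim_subseq[OF s]] .
  have "uniformly_Cauchy_on UNIV (\<lambda>k. z (s k))"
    using M \<tau> A der per z0 r_lim by (rule approximate_linear_ode_solutions_uniformly_Cauchy)
  then obtain w where w: "uniform_limit UNIV (\<lambda>k. z (s k)) w sequentially"
    using Cauchy_uniformly_convergent unfolding uniformly_convergent_on_def by blast
  have lim: "(\<lambda>k. z (s k) t) \<longlonglongrightarrow> w t" for t
    using tendsto_uniform_limitI[OF w] by simp
  have "(w has_vector_derivative A t (w t)) (at t)" for t
    using A der w r_lim by (rule approximate_linear_ode_solutions_limit)
  moreover have "w (t + \<tau>) = M (w t)" for t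
  proof -
    have "(\<lambda>k. z (s k) (t + \<tau>)) \<longlonglongrightarrow> M (w t)"
      unfolding per using orthogonal_transformation_linear[OF M] bounded_linear.tendsto[OF _ lim]
      by (simp add: linear_conv_bounded_linear)
    then show ?thesis using lim LIMSEQ_unique by blast
  qed
  ultimately show thesis using that s lim by blast
qed

section \<open>Phase normalization\<close>

lemma has_vector_derivative_transversal_growth:
  fixes v0 :: "real \<Rightarrow> 'a::real_inner"
  assumes "(v0 has_vector_derivative \<xi>) (at 0)"
  obtains d where "d > 0"
    "\<And>y. \<bar>y\<bar> < d \<Longrightarrow> \<bar>(v0 y - v0 0) \<bullet> \<xi> - y * (norm \<xi>)\<^sup>2\<bar> \<le> (norm \<xi>)\<^sup>2 / 2 * \<bar>y\<bar>"
proof (cases "\<xi> = 0")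
  case True
  then show thesis using that[of 1] by simp
next
  case False
  then have "norm \<xi> / 2 > 0" by simp
  moreover have "\<forall>e>0. \<exists>d>0. \<forall>y. norm (y - 0) < d \<longrightarrow>
      norm (v0 y - v0 0 - y *\<^sub>R \<xi>) \<le> e * norm (y - 0)"
    using assms unfolding has_vector_derivative_def has_derivative_at_alt by simp
  ultimately obtain d where "d > 0"
    and d: "\<And>y. norm (y - 0) < d \<Longrightarrow> norm (v0 y - v0 0 - y *\<^sub>R \<xi>) \<le> norm \<xi> / 2 * norm (y - 0)"
    by meson
  have "\<bar>(v0 y - v0 0) \<bullet> \<xi> - y * (norm \<xi>)\<^sup>2\<bar> \<le> (norm \<xi>)\<^sup>2 / 2 * \<bar>y\<bar>" if "\<bar>y\<bar> < d" for y
  proof -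
    have "\<bar>(v0 y - v0 0) \<bullet> \<xi> - y * (norm \<xi>)\<^sup>2\<bar> = \<bar>(v0 y - v0 0 - y *\<^sub>R \<xi>) \<bullet> \<xi>\<bar>"
      by (simp add: inner_diff_left power2_norm_eq_inner)
    also have "\<dots> \<le> norm (v0 y - v0 0 - y *\<^sub>R \<xi>) * norm \<xi>"
      by (rule Cauchy_Schwarz_ineq2)
    also have "\<dots> \<le> norm \<xi> / 2 * \<bar>y\<bar> * norm \<xi>"
      using d[of y] that by (intro mult_right_mono) simp_all
    finally show ?thesis by (simp add: power2_eq_square algebra_simps)
  qed
  with \<open>d > 0\<close> show thesis by (rule that)
qed

lemma transversal_section_crossing:
  fixes v0 w :: "real \<Rightarrow> 'a::real_inner"
  assumes growth: "\<And>y. \<bar>y\<bar> < d \<Longrightarrow> \<bar>(v0 y - v0 0) \<bullet> \<xi> - y * (norm \<xi>)\<^sup>2\<bar> \<le> (norm \<xi>)\<^sup>2 / 2 * \<bar>y\<bar>"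
    and "\<xi> \<noteq> 0" and w: "continuous_on UNIV w" and close: "\<And>t. norm (w t - v0 t) \<le> e"
    and small: "4 * e / norm \<xi> < d"
  shows "\<exists>\<theta>. \<bar>\<theta>\<bar> \<le> 4 * e / norm \<xi> \<and> (w \<theta> - v0 0) \<bullet> \<xi> = 0"
proof -
  define c where "c = norm \<xi>"
  define \<eta> where "\<eta> = 4 * e / c"
  define G where "G y = (w y - v0 0) \<bullet> \<xi>" for y
  have "c > 0" unfolding c_def using \<open>\<xi> \<noteq> 0\<close> by simp
  have "e \<ge> 0" using close[of 0] by (meson norm_ge_zero order_trans)
  then have "\<eta> \<ge> 0" and \<eta>c: "c\<^sup>2 / 2 * \<eta> = 2 * (e * c)" "\<eta> * c\<^sup>2 = 4 * (e * c)"
    using \<open>c > 0\<close> unfolding \<eta>_def by (auto simp: power2_eq_square)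
  have err: "\<bar>G y - (v0 y - v0 0) \<bullet> \<xi>\<bar> \<le> e * c" for y
  proof -
    have "\<bar>G y - (v0 y - v0 0) \<bullet> \<xi>\<bar> = \<bar>(w y - v0 y) \<bullet> \<xi>\<bar>"
      unfolding G_def by (simp add: inner_diff_left)
    also have "\<dots> \<le> norm (w y - v0 y) * c"
      unfolding c_def by (rule Cauchy_Schwarz_ineq2)
    also have "\<dots> \<le> e * c"
      using \<open>c > 0\<close> by (intro mult_right_mono close) simp
    finally show ?thesis .
  qed
  have "\<bar>\<eta>\<bar> < d" "\<bar>- \<eta>\<bar> < d" using small \<open>\<eta> \<ge> 0\<close> unfolding \<eta>_def c_def by auto
  then have "\<bar>(v0 \<eta> - v0 0) \<bullet> \<xi> - \<eta> * c\<^sup>2\<bar> \<le> c\<^sup>2 / 2 * \<eta>"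
    "\<bar>(v0 (- \<eta>) - v0 0) \<bullet> \<xi> + \<eta> * c\<^sup>2\<bar> \<le> c\<^sup>2 / 2 * \<eta>"
    using growth[of \<eta>] growth[of "- \<eta>"] \<open>\<eta> \<ge> 0\<close> unfolding c_def by simp_all
  then have "G (- \<eta>) \<le> 0" "G \<eta> \<ge> 0"
    using err[of \<eta>] err[of "- \<eta>"] \<eta>c \<open>c > 0\<close> \<open>e \<ge> 0\<close> unfolding abs_le_iff by linarith+
  moreover have "continuous_on {- \<eta>..\<eta>} G"
    unfolding G_def by (intro continuous_intros continuous_on_subset[OF w]) simp
  ultimately obtain \<theta> where "- \<eta> \<le> \<theta>" "\<theta> \<le> \<eta>" "G \<theta> = 0"
    using IVT'[of G "- \<eta>" 0 \<eta>] \<open>\<eta> \<ge> 0\<close> by auto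
  then show ?thesis unfolding \<eta>_def c_def G_def by (intro exI[of _ \<theta>]) auto
qed

lemma phase_normalization:
  fixes v0 :: "real \<Rightarrow> 'a::real_inner" and v :: "nat \<Rightarrow> real \<Rightarrow> 'a"
  assumes "(v0 has_vector_derivative \<xi>) (at 0)" and "\<xi> \<noteq> 0"
    and cont: "\<And>k. continuous_on UNIV (v k)"
    and close: "\<And>k t. norm (v k t - v0 t) \<le> e k" and "e \<longlonglongrightarrow> 0"
  obtains \<theta> where "\<theta> \<longlonglongrightarrow> 0" "\<forall>\<^sub>F k in sequentially. (v k (\<theta> k) - v0 0) \<bullet> \<xi> = 0"
proof -
  obtain d where "d > 0" and growth:
    "\<And>y. \<bar>y\<bar> < d \<Longrightarrow> \<bar>(v0 y - v0 0) \<bullet> \<xi> - y * (norm \<xi>)\<^sup>2\<bar> \<le> (norm \<xi>)\<^sup>2 / 2 * \<bar>y\<bar>"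
    using has_vector_derivative_transversal_growth[OF assms(1)] by blast
  define \<eta> where "\<eta> k = 4 * e k / norm \<xi>" for k
  have "\<eta> \<longlonglongrightarrow> 4 * 0 / norm \<xi>"
    unfolding \<eta>_def using \<open>\<xi> \<noteq> 0\<close> by (intro tendsto_intros \<open>e \<longlonglongrightarrow> 0\<close>) simp
  then have \<eta>: "\<eta> \<longlonglongrightarrow> 0" by simp
  have "\<exists>\<theta>. \<bar>\<theta>\<bar> \<le> \<bar>\<eta> k\<bar> \<and> (\<eta> k < d \<longrightarrow> (v k \<theta> - v0 0) \<bullet> \<xi> = 0)" for k
  proof (cases "\<eta> k < d")
    case True
    then obtain \<theta> where "\<bar>\<theta>\<bar> \<le> \<eta> k" "(v k \<theta> - v0 0) \<bullet> \<xi> = 0"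
      using transversal_section_crossing[where d = d, OF growth \<open>\<xi> \<noteq> 0\<close> cont close[of k]]
      unfolding \<eta>_def by blast
    then show ?thesis by (intro exI[of _ \<theta>]) auto
  qed (intro exI[of _ 0], simp)
  then have "\<exists>\<theta>. \<forall>k. \<bar>\<theta> k\<bar> \<le> \<bar>\<eta> k\<bar> \<and> (\<eta> k < d \<longrightarrow> (v k (\<theta> k) - v0 0) \<bullet> \<xi> = 0)"
    by (intro choice allI)
  then obtain \<theta> where \<theta>: "\<And>k. \<bar>\<theta> k\<bar> \<le> \<bar>\<eta> k\<bar>"
    "\<And>k. \<eta> k < d \<Longrightarrow> (v k (\<theta> k) - v0 0) \<bullet> \<xi> = 0"
    by blast
  have "\<theta> \<longlonglongrightarrow> 0"
    using \<theta>(1) by (intro Lim_null_comparison[OF _ tendsto_rabs_zero[OF \<eta>]]) simp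
  moreover have "\<forall>\<^sub>F k in sequentially. \<eta> k < d"
    using \<eta> \<open>d > 0\<close> by (rule order_tendstoD(2))
  then have "\<forall>\<^sub>F k in sequentially. (v k (\<theta> k) - v0 0) \<bullet> \<xi> = 0"
    by eventually_elim (rule \<theta>(2))
  ultimately show thesis by (rule that)
qed

lemma R_distinct_eventually_not_shift:
  assumes "\<And>i j. i \<noteq> j \<Longrightarrow> R_distinct (v i) (v j)"
  shows "\<forall>\<^sub>F k in sequentially. \<forall>\<theta>. v k \<noteq> (\<lambda>t. p (\<theta> + t))"
proof (cases "\<exists>k0 \<theta>0. v k0 = (\<lambda>t. p (\<theta>0 + t))")
  case True
  then obtain k0 \<theta>0 where k0: "v k0 = (\<lambda>t. p (\<theta>0 + t))" by blast
  have "\<forall>\<theta>. v k \<noteq> (\<lambda>t. p (\<theta> + t))" if "k > k0" for k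
  proof (intro allI notI)
    fix \<theta> assume "v k = (\<lambda>t. p (\<theta> + t))"
    then have "v k = (\<lambda>t. v k0 ((\<theta> - \<theta>0) + t))" using k0 by (simp add: algebra_simps)
    then show False using assms[of k k0] that unfolding R_distinct_def by auto
  qed
  then show ?thesis
    unfolding eventually_sequentially by (intro exI[of _ "Suc k0"]) simp
qed simp

lemma R_distinct_solutions_eventually_miss:
  fixes F :: "real \<Rightarrow> 'a::euclidean_space \<Rightarrow> 'a" and DF :: "real \<Rightarrow> 'a \<Rightarrow> 'a \<Rightarrow>\<^sub>L 'a"
  assumes F: "\<And>k x. (F (lam k) has_derivative blinfun_apply (DF (lam k) x)) (at x)"
    and DF: "\<And>k. continuous_on UNIV (DF (lam k))"
    and v0: "\<And>k t. (v0 has_vector_derivative F (lam k) (v0 t)) (at t)" "\<And>t. norm (v0 t) \<le> R"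
    and v: "\<And>k t. (v k has_vector_derivative F (lam k) (v k t)) (at t)" "\<And>k t. norm (v k t) \<le> B k"
    and v_distinct: "\<And>i j. i \<noteq> j \<Longrightarrow> R_distinct (v i) (v j)"
  shows "\<forall>\<^sub>F k in sequentially. \<forall>\<theta>. v k \<theta> \<noteq> v0 0"
proof -
  have "\<forall>\<^sub>F k in sequentially. \<forall>\<theta>. v k \<noteq> (\<lambda>t. v0 (\<theta> + t))"
    by (rule R_distinct_eventually_not_shift) (rule v_distinct)
  then show ?thesis
  proof eventually_elim
    case (elim k)
    show ?case
    proof (intro allI notI)
      fix \<theta> assume hit: "v k \<theta> = v0 0"
      have "v k (\<theta> + t) = v0 t" for t
      proof (rule autonomous_ode_solution_unique[OF F[of k] DF[of k]
            has_vector_derivative_shift[OF v(1)[of k]] v0(1)[of k]])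
        show "norm (v k (\<theta> + s)) \<le> max R (B k)" "norm (v0 s) \<le> max R (B k)" for s
          using v(2)[of k] v0(2)[of s] by (simp_all add: le_max_iff_disj)
        show "v k (\<theta> + 0) = v0 0" using hit by simp
      qed
      then have "v k = (\<lambda>t. v0 (- \<theta> + t))"
        by (metis add.commute diff_add_cancel uminus_add_conv_diff)
      then show False using elim by blast
    qed
  qed
qed

lemma phase_normalized_crossings:
  fixes F :: "real \<Rightarrow> 'a::euclidean_space \<Rightarrow> 'a" and DF :: "real \<Rightarrow> 'a \<Rightarrow> 'a \<Rightarrow>\<^sub>L 'a"
    and v0 :: "real \<Rightarrow> 'a" and v :: "nat \<Rightarrow> real \<Rightarrow> 'a"
  assumes "\<mu> \<in> \<Lambda>" and lam_in: "\<And>k. lam k \<in> \<Lambda>"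
    and F: "\<And>l x. l \<in> \<Lambda> \<Longrightarrow> (F l has_derivative blinfun_apply (DF l x)) (at x)"
    and DF: "continuous_on (\<Lambda> \<times> UNIV) (\<lambda>(l, x). DF l x)"
    and v0_sol: "\<And>l t. l \<in> \<Lambda> \<Longrightarrow> (v0 has_vector_derivative F l (v0 t)) (at t)"
    and R: "\<And>t. norm (v0 t) \<le> R"
    and v_sol: "\<And>k t. (v k has_vector_derivative F (lam k) (v k t)) (at t)"
    and v_distinct: "\<And>i j. i \<noteq> j \<Longrightarrow> R_distinct (v i) (v j)"
    and close: "\<And>k t. norm (v k t - v0 t) \<le> e k" and "e \<longlonglongrightarrow> 0"
    and \<xi>: "F \<mu> (v0 0) \<noteq> 0"
  obtains \<theta> N where "\<theta> \<longlonglongrightarrow> 0"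
    "\<And>k. k \<ge> N \<Longrightarrow> v k (\<theta> k) \<noteq> v0 0 \<and> (v k (\<theta> k) - v0 0) \<bullet> F \<mu> (v0 0) = 0"
proof -
  have "continuous_on UNIV (v k)" for k
    using v_sol by (auto intro!: continuous_at_imp_continuous_on has_vector_derivative_continuous)
  then obtain \<theta> where "\<theta> \<longlonglongrightarrow> 0"
    and phase: "\<forall>\<^sub>F k in sequentially. (v k (\<theta> k) - v0 0) \<bullet> F \<mu> (v0 0) = 0"
    using phase_normalization[OF v0_sol[OF \<open>\<mu> \<in> \<Lambda>\<close>] \<xi> _ close \<open>e \<longlonglongrightarrow> 0\<close>] by blast
  have "\<forall>\<^sub>F k in sequentially. \<forall>\<theta>. v k \<theta> \<noteq> v0 0"
  proof (rule R_distinct_solutions_eventually_miss[where F = F and DF = DF and lam = lam])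
    show "(F (lam k) has_derivative blinfun_apply (DF (lam k) x)) (at x)" for k x
      using F lam_in by blast
    show "continuous_on UNIV (DF (lam k))" for k
      using continuous_on_Times_slice[OF DF lam_in] .
    show "(v0 has_vector_derivative F (lam k) (v0 t)) (at t)" for k t
      using v0_sol lam_in by blast
    show "norm (v k t) \<le> R + e k" for k t
      using R[of t] close[of k t] norm_triangle_sub[of "v k t" "v0 t"] by simp
  qed (use v_sol v_distinct R in auto)
  with phase have "\<forall>\<^sub>F k in sequentially.
      v k (\<theta> k) \<noteq> v0 0 \<and> (v k (\<theta> k) - v0 0) \<bullet> F \<mu> (v0 0) = 0"
    by eventually_elim blast
  then show thesis
    using that[OF \<open>\<theta> \<longlonglongrightarrow> 0\<close>] unfolding eventually_sequentially by blast
qed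

section \<open>Linearization\<close>

lemma continuous_family_locally_uniformly_close:
  fixes DF :: "real \<Rightarrow> 'a::euclidean_space \<Rightarrow> 'b::real_normed_vector"
  assumes "open \<Lambda>" "\<mu> \<in> \<Lambda>" and cont: "continuous_on (\<Lambda> \<times> UNIV) (\<lambda>(l, x). DF l x)"
    and "\<eta> > 0"
  obtains \<delta> where "\<delta> > 0" "ball \<mu> \<delta> \<subseteq> \<Lambda>"
    "\<And>l x y. dist l \<mu> < \<delta> \<Longrightarrow> norm x \<le> R \<Longrightarrow> norm (y - x) < \<delta> \<Longrightarrow> norm (DF l y - DF \<mu> x) < \<eta>"
proof -
  obtain d where "d > 0" "cball \<mu> d \<subseteq> \<Lambda>"
    using assms(1,2) open_contains_cball by blast
  define K where "K = cball \<mu> d \<times> cball (0::'a) (R + 1)"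
  have "compact K" unfolding K_def by (simp add: compact_Times)
  moreover have "K \<subseteq> \<Lambda> \<times> UNIV" unfolding K_def using \<open>cball \<mu> d \<subseteq> \<Lambda>\<close> by auto
  ultimately have "uniformly_continuous_on K (\<lambda>(l, x). DF l x)"
    using compact_uniformly_continuous continuous_on_subset[OF cont] by blast
  then obtain \<delta>0 where "\<delta>0 > 0" and \<delta>0: "\<And>p q. p \<in> K \<Longrightarrow> q \<in> K \<Longrightarrow> dist q p < \<delta>0 \<Longrightarrow>
      dist ((\<lambda>(l, x). DF l x) q) ((\<lambda>(l, x). DF l x) p) < \<eta>"
    unfolding uniformly_continuous_on_def using \<open>\<eta> > 0\<close> by metis
  define \<delta> where "\<delta> = min (\<delta>0 / 2) (min d 1)"
  have "\<delta> > 0" unfolding \<delta>_def using \<open>\<delta>0 > 0\<close> \<open>d > 0\<close> by simp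
  moreover have "ball \<mu> \<delta> \<subseteq> \<Lambda>"
    using \<open>cball \<mu> d \<subseteq> \<Lambda>\<close> unfolding \<delta>_def by (auto simp: dist_commute)
  moreover have "norm (DF l y - DF \<mu> x) < \<eta>"
    if "dist l \<mu> < \<delta>" "norm x \<le> R" "norm (y - x) < \<delta>" for l x y
  proof -
    have "norm y \<le> norm x + norm (y - x)" by (rule norm_triangle_sub)
    then have "(l, y) \<in> K" "(\<mu>, x) \<in> K"
      using that \<open>d > 0\<close> unfolding K_def \<delta>_def by (auto simp: dist_commute)
    moreover have "dist (l, y) (\<mu>, x) < \<delta>0"
      using dist_Pair_Pair[of l y \<mu> x] sqrt_sum_squares_le_sum_abs[of "dist l \<mu>" "dist y x"] that
      unfolding \<delta>_def by (simp add: dist_norm)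
    ultimately show ?thesis using \<delta>0 by (force simp: dist_norm)
  qed
  ultimately show thesis by (rule that)
qed

lemma linearization_error_le:
  fixes f :: "'a::real_normed_vector \<Rightarrow> 'b::real_normed_vector" and Df :: "'a \<Rightarrow> 'a \<Rightarrow>\<^sub>L 'b"
  assumes f: "\<And>y. y \<in> ball a r \<Longrightarrow> (f has_derivative blinfun_apply (Df y)) (at y)"
    and close: "\<And>y. y \<in> ball a r \<Longrightarrow> norm (Df y - D) \<le> \<epsilon>" and h: "norm h < r"
  shows "norm (f (a + h) - f a - D h) \<le> 3 * \<epsilon> * norm h"
proof -
  have a: "a \<in> ball a r" using h norm_ge_zero[of h] by (simp del: norm_ge_zero)
  have "norm (f (a + h) - f a - Df a ((a + h) - a)) \<le> norm ((a + h) - a) * (2 * \<epsilon>)"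
  proof (rule differentiable_bound_linearization[where S = "ball a r" and ?x0.0 = a
        and f' = "\<lambda>y. blinfun_apply (Df y)"])
    show "a + s *\<^sub>R (a + h - a) \<in> ball a r" if "s \<in> {0..1}" for s
      using h that mult_left_le_one_le[of "norm h" s] by (simp add: dist_norm)
    show "(f has_derivative blinfun_apply (Df y)) (at y within ball a r)" if "y \<in> ball a r" for y
      using f[OF that] by (rule has_derivative_at_withinI)
    show "onorm (blinfun_apply (Df y) - blinfun_apply (Df a)) \<le> 2 * \<epsilon>" if "y \<in> ball a r" for y
    proof -
      have "norm (Df y - Df a) \<le> norm (Df y - D) + norm (Df a - D)"
        using norm_triangle_ineq4[of "Df y - D" "Df a - D"] by simp
      also have "\<dots> \<le> 2 * \<epsilon>"
        using close[OF that] close[OF a] by simp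
      finally show ?thesis
        by (simp add: norm_blinfun.rep_eq minus_blinfun.rep_eq fun_diff_def)
    qed
  qed (rule a)
  moreover have "norm (Df a h - D h) \<le> \<epsilon> * norm h"
  proof -
    have "norm ((Df a - D) h) \<le> \<epsilon> * norm h"
      using close[OF a] by (rule norm_blinfun_apply_le)
    then show ?thesis by (simp add: blinfun.diff_left)
  qed
  ultimately show ?thesis
    using norm_triangle_ineq[of "f (a + h) - f a - Df a h" "Df a h - D h"]
    by (simp add: algebra_simps)
qed

lemma uniform_linearization:
  fixes F :: "real \<Rightarrow> 'a::euclidean_space \<Rightarrow> 'b::real_normed_vector"
    and DF :: "real \<Rightarrow> 'a \<Rightarrow> 'a \<Rightarrow>\<^sub>L 'b"
  assumes "open \<Lambda>" "\<mu> \<in> \<Lambda>" and lam: "lam \<longlonglongrightarrow> \<mu>"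
    and F: "\<And>l x. l \<in> \<Lambda> \<Longrightarrow> (F l has_derivative blinfun_apply (DF l x)) (at x)"
    and DF: "continuous_on (\<Lambda> \<times> UNIV) (\<lambda>(l, x). DF l x)"
    and p: "\<And>t. norm (p t) \<le> R"
    and u: "\<And>k t. norm (u k t) \<le> \<sigma> k" and "\<sigma> \<longlonglongrightarrow> 0" and "\<eta> > 0"
  shows "\<forall>\<^sub>F k in sequentially. \<forall>t.
           norm (F (lam k) (p t + u k t) - F (lam k) (p t) - DF \<mu> (p t) (u k t)) \<le> \<eta> * norm (u k t)"
proof -
  obtain \<delta> where "\<delta> > 0" "ball \<mu> \<delta> \<subseteq> \<Lambda>" and close:
    "\<And>l x y. dist l \<mu> < \<delta> \<Longrightarrow> norm x \<le> R \<Longrightarrow> norm (y - x) < \<delta> \<Longrightarrow> norm (DF l y - DF \<mu> x) < \<eta> / 3"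
    using continuous_family_locally_uniformly_close[OF assms(1,2) DF, of "\<eta> / 3"] \<open>\<eta> > 0\<close> by auto
  have "\<forall>\<^sub>F k in sequentially. dist (lam k) \<mu> < \<delta>"
    using lam \<open>\<delta> > 0\<close> by (simp add: tendsto_iff)
  moreover have "\<forall>\<^sub>F k in sequentially. \<sigma> k < \<delta>"
    using \<open>\<sigma> \<longlonglongrightarrow> 0\<close> \<open>\<delta> > 0\<close> by (rule order_tendstoD(2))
  ultimately show ?thesis
  proof eventually_elim
    case (elim k)
    have "lam k \<in> \<Lambda>" using elim(1) \<open>ball \<mu> \<delta> \<subseteq> \<Lambda>\<close> by (auto simp: dist_commute)
    have "norm (F (lam k) (p t + u k t) - F (lam k) (p t) - DF \<mu> (p t) (u k t))
        \<le> 3 * (\<eta> / 3) * norm (u k t)" for t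
    proof (rule linearization_error_le)
      show "(F (lam k) has_derivative blinfun_apply (DF (lam k) y)) (at y)" for y
        using F[OF \<open>lam k \<in> \<Lambda>\<close>] .
      show "norm (DF (lam k) y - DF \<mu> (p t)) \<le> \<eta> / 3" if "y \<in> ball (p t) \<delta>" for y
        using close[OF elim(1) p[of t], of y] that by (simp add: dist_norm norm_minus_commute)
      show "norm (u k t) < \<delta>" using u[of k t] elim(2) by simp
    qed
    then show ?case by simp
  qed
qed

lemma normalized_perturbations_converge_to_linearized_solution:
  fixes F :: "real \<Rightarrow> 'a::euclidean_space \<Rightarrow> 'a" and DF :: "real \<Rightarrow> 'a \<Rightarrow> 'a \<Rightarrow>\<^sub>L 'a"
    and p :: "real \<Rightarrow> 'a" and u :: "nat \<Rightarrow> real \<Rightarrow> 'a"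
  assumes M: "orthogonal_transformation M" and \<tau>: "\<tau> > 0"
    and \<Lambda>: "open \<Lambda>" "\<mu> \<in> \<Lambda>" and lam: "lam \<longlonglongrightarrow> \<mu>"
    and F: "\<And>l x. l \<in> \<Lambda> \<Longrightarrow> (F l has_derivative blinfun_apply (DF l x)) (at x)"
    and DF: "continuous_on (\<Lambda> \<times> UNIV) (\<lambda>(l, x). DF l x)"
    and p: "\<And>t. norm (p t) \<le> R"
    and u: "\<And>k t. (u k has_vector_derivative F (lam k) (p t + u k t) - F (lam k) (p t)) (at t)"
    and per: "\<And>k t. u k (t + \<tau>) = M (u k t)"
    and small: "\<And>k t. norm (u k t) \<le> \<sigma> k" "\<sigma> \<longlonglongrightarrow> 0"
    and nonzero: "\<And>k. u k 0 \<noteq> 0"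
  obtains s w where "strict_mono s" "(\<lambda>k. sgn (u (s k) 0)) \<longlonglongrightarrow> w 0" "norm (w 0) = 1"
    "\<And>t. (w has_vector_derivative DF \<mu> (p t) (w t)) (at t)" "\<And>t. w (t + \<tau>) = M (w t)"
proof -
  obtain K where "\<And>x. norm x \<le> R \<Longrightarrow> norm (DF \<mu> x) \<le> K"
    using continuous_on_norm_bounded_on_cball[OF continuous_on_Times_slice[OF DF \<open>\<mu> \<in> \<Lambda>\<close>]]
    by blast
  then have K: "norm (DF \<mu> (p t)) \<le> K" for t
    using p by simp
  define z where "z k t = u k t /\<^sub>R norm (u k 0)" for k t
  define r where "r k t = (F (lam k) (p t + u k t) - F (lam k) (p t)) /\<^sub>R norm (u k 0)
      - DF \<mu> (p t) (z k t)" for k t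
  have z_der: "(z k has_vector_derivative DF \<mu> (p t) (z k t) + r k t) (at t)" for k t
    using bounded_linear.has_vector_derivative[OF bounded_linear_scaleR_right u]
    unfolding z_def r_def by simp
  have z_per: "z k (t + \<tau>) = M (z k t)" for k t
    unfolding z_def using per linear_cmul[OF orthogonal_transformation_linear[OF M]] by simp
  have z_unit: "norm (z k 0) = 1" for k
    unfolding z_def using nonzero by simp
  have r_small: "\<forall>\<^sub>F k in sequentially. \<forall>t. norm (r k t) \<le> \<eta> * norm (z k t)" if "\<eta> > 0" for \<eta>
  proof -
    have "\<forall>\<^sub>F k in sequentially. \<forall>t. norm (F (lam k) (p t + u k t) - F (lam k) (p t)
        - DF \<mu> (p t) (u k t)) \<le> \<eta> * norm (u k t)"
      using \<Lambda> lam F DF p small \<open>\<eta> > 0\<close> by (rule uniform_linearization)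
    then show ?thesis
    proof eventually_elim
      case (elim k)
      have "norm (r k t) \<le> \<eta> * norm (z k t)" for t
      proof -
        have "r k t = (F (lam k) (p t + u k t) - F (lam k) (p t) - DF \<mu> (p t) (u k t)) /\<^sub>R norm (u k 0)"
          unfolding r_def z_def by (simp add: blinfun.scaleR_right scaleR_diff_right)
        then show ?thesis
          using elim[rule_format, of t] nonzero[of k]
          unfolding z_def by (simp add: divide_right_mono)
      qed
      then show ?case by blast
    qed
  qed
  show thesis
  proof (rule normalized_approximate_solutions_converge[OF M \<tau> K z_der z_per z_unit])
    show "\<forall>\<^sub>F k in sequentially. \<forall>t. norm (r k t) \<le> \<eta> * norm (z k t)" if "\<eta> > 0" for \<eta>
      using r_small[OF that] .
  next
    fix s w
    assume "strict_mono s" and lim: "(\<lambda>k. z (s k) 0) \<longlonglongrightarrow> w 0"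
      and "\<And>t. (w has_vector_derivative DF \<mu> (p t) (w t)) (at t)" "\<And>t. w (t + \<tau>) = M (w t)"
    moreover have "norm (w 0) = 1"
      using tendsto_norm[OF lim] z_unit LIMSEQ_unique[OF _ tendsto_const] by simp
    ultimately show thesis
      by (intro that[of s w]) (simp_all add: z_def sgn_div_norm)
  qed
qed

section \<open>The bifurcation theorem\<close>

lemma bifurcation_yields_linearized_solution:
  fixes F :: "real \<Rightarrow> 'a::euclidean_space \<Rightarrow> 'a" and DF :: "real \<Rightarrow> 'a \<Rightarrow> 'a \<Rightarrow>\<^sub>L 'a"
    and v0 :: "real \<Rightarrow> 'a" and v :: "nat \<Rightarrow> real \<Rightarrow> 'a"
  assumes M: "orthogonal_transformation M" and \<tau>: "\<tau> > 0"
    and \<Lambda>: "open \<Lambda>" "\<mu> \<in> \<Lambda>" and lam_in: "\<And>k. lam k \<in> \<Lambda>" and lam: "lam \<longlonglongrightarrow> \<mu>"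
    and F: "\<And>l x. l \<in> \<Lambda> \<Longrightarrow> (F l has_derivative blinfun_apply (DF l x)) (at x)"
    and DF: "continuous_on (\<Lambda> \<times> UNIV) (\<lambda>(l, x). DF l x)"
    and v0_sol: "\<And>l t. l \<in> \<Lambda> \<Longrightarrow> (v0 has_vector_derivative F l (v0 t)) (at t)"
    and v0_per: "\<And>t. v0 (t + \<tau>) = M (v0 t)" and R: "\<And>t. norm (v0 t) \<le> R"
    and v_sol: "\<And>k t. (v k has_vector_derivative F (lam k) (v k t)) (at t)"
    and v_per: "\<And>k t. v k (t + \<tau>) = M (v k t)"
    and v_distinct: "\<And>i j. i \<noteq> j \<Longrightarrow> R_distinct (v i) (v j)"
    and close: "\<And>k t. norm (v k t - v0 t) \<le> e k" and "e \<longlonglongrightarrow> 0"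
    and \<xi>: "F \<mu> (v0 0) \<noteq> 0"
  obtains w where "\<And>t. (w has_vector_derivative DF \<mu> (v0 t) (w t)) (at t)"
    "\<And>t. w (t + \<tau>) = M (w t)" "w 0 \<noteq> 0" "w 0 \<bullet> F \<mu> (v0 0) = 0"
proof -
  obtain \<theta> N where "\<theta> \<longlonglongrightarrow> 0" and N: "\<And>k. k \<ge> N \<Longrightarrow>
      v k (\<theta> k) \<noteq> v0 0 \<and> (v k (\<theta> k) - v0 0) \<bullet> F \<mu> (v0 0) = 0"
    using phase_normalized_crossings[OF \<open>\<mu> \<in> \<Lambda>\<close> lam_in F DF v0_sol R v_sol v_distinct close
        \<open>e \<longlonglongrightarrow> 0\<close> \<xi>] by blast
  have "continuous_on UNIV (F \<mu>)"
    using F[OF \<open>\<mu> \<in> \<Lambda>\<close>] by (auto intro!: continuous_at_imp_continuous_on has_derivative_continuous)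
  then obtain L where "\<And>x. norm x \<le> R \<Longrightarrow> norm (F \<mu> x) \<le> L"
    using continuous_on_norm_bounded_on_cball by blast
  then have v0_lipschitz: "norm (v0 (\<theta> + t) - v0 t) \<le> L * \<bar>\<theta>\<bar>" for \<theta> t
    using norm_diff_le_of_vector_derivative_bound[OF v0_sol[OF \<open>\<mu> \<in> \<Lambda>\<close>], of L "\<theta> + t" t] R
    by simp
  define u where "u k t = v (k + N) (\<theta> (k + N) + t) - v0 t" for k t
  define \<sigma> where "\<sigma> k = e (k + N) + L * \<bar>\<theta> (k + N)\<bar>" for k
  have u_small: "norm (u k t) \<le> \<sigma> k" for k t
    using close[of "k + N" "\<theta> (k + N) + t"] v0_lipschitz[of "\<theta> (k + N)" t]
      norm_triangle_ineq[of "v (k + N) (\<theta> (k + N) + t) - v0 (\<theta> (k + N) + t)" "v0 (\<theta> (k + N) + t) - v0 t"]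
    unfolding u_def \<sigma>_def by simp
  have "\<sigma> \<longlonglongrightarrow> 0 + L * \<bar>0\<bar>"
    unfolding \<sigma>_def using \<open>e \<longlonglongrightarrow> 0\<close> \<open>\<theta> \<longlonglongrightarrow> 0\<close>
    by (intro tendsto_intros) (simp_all add: LIMSEQ_ignore_initial_segment)
  then have \<sigma>: "\<sigma> \<longlonglongrightarrow> 0" by simp
  have u_der: "(u k has_vector_derivative
      F (lam (k + N)) (v0 t + u k t) - F (lam (k + N)) (v0 t)) (at t)" for k t
    unfolding u_def
    using has_vector_derivative_diff[OF has_vector_derivative_shift[OF v_sol] v0_sol[OF lam_in]]
    by simp
  have u_per: "u k (t + \<tau>) = M (u k t)" for k t
    using v_per[of "k + N" "\<theta> (k + N) + t"] v0_per[of t]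
      linear_diff[OF orthogonal_transformation_linear[OF M]]
    unfolding u_def by (simp add: add.assoc)
  have lam_N: "(\<lambda>k. lam (k + N)) \<longlonglongrightarrow> \<mu>"
    using lam by (rule LIMSEQ_ignore_initial_segment)
  have u0: "u k 0 \<noteq> 0" "u k 0 \<bullet> F \<mu> (v0 0) = 0" for k
    using N[of "k + N"] unfolding u_def by simp_all
  obtain s w where lim: "(\<lambda>k. sgn (u (s k) 0)) \<longlonglongrightarrow> w 0" and "norm (w 0) = 1"
    and w: "\<And>t. (w has_vector_derivative DF \<mu> (v0 t) (w t)) (at t)" "\<And>t. w (t + \<tau>) = M (w t)"
  proof (rule normalized_perturbations_converge_to_linearized_solution
      [OF M \<tau> \<Lambda> lam_N F DF R u_der u_per u_small \<sigma> u0(1)])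
    fix s w assume "strict_mono s" "(\<lambda>k. sgn (u (s k) 0)) \<longlonglongrightarrow> w 0" "norm (w 0) = 1"
      "\<And>t. (w has_vector_derivative DF \<mu> (v0 t) (w t)) (at t)" "\<And>t. w (t + \<tau>) = M (w t)"
    then show thesis by (intro that[of s w])
  qed
  have "(\<lambda>k. sgn (u (s k) 0) \<bullet> F \<mu> (v0 0)) \<longlonglongrightarrow> w 0 \<bullet> F \<mu> (v0 0)"
    using lim by (intro tendsto_intros)
  then have "w 0 \<bullet> F \<mu> (v0 0) = 0"
    using u0(2) LIMSEQ_unique[OF _ tendsto_const] by (simp add: sgn_div_norm)
  then show thesis
    using that[of w] w \<open>norm (w 0) = 1\<close> by fastforce
qed

theorem bifurcation_degenerate_linearization:
  fixes F :: "real \<Rightarrow> 'a::euclidean_space \<Rightarrow> 'a" and DF :: "real \<Rightarrow> 'a \<Rightarrow> 'a \<Rightarrow>\<^sub>L 'a"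
    and v0 :: "real \<Rightarrow> 'a" and v :: "nat \<Rightarrow> real \<Rightarrow> 'a"
  assumes M: "orthogonal_transformation M" and \<tau>: "\<tau> > 0"
    and \<Lambda>: "open \<Lambda>" "\<mu> \<in> \<Lambda>" and lam_in: "\<And>k. lam k \<in> \<Lambda>" and lam: "lam \<longlonglongrightarrow> \<mu>"
    and F: "\<And>l x. l \<in> \<Lambda> \<Longrightarrow> (F l has_derivative blinfun_apply (DF l x)) (at x)"
    and DF: "continuous_on (\<Lambda> \<times> UNIV) (\<lambda>(l, x). DF l x)"
    and v0_nonconst: "\<exists>s t. v0 s \<noteq> v0 t"
    and v0_sol: "\<And>l t. l \<in> \<Lambda> \<Longrightarrow> (v0 has_vector_derivative F l (v0 t)) (at t)"
    and v0_per: "\<And>t. v0 (t + \<tau>) = M (v0 t)"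
    and v_sol: "\<And>k t. (v k has_vector_derivative F (lam k) (v k t)) (at t)"
    and v_per: "\<And>k t. v k (t + \<tau>) = M (v k t)"
    and v_distinct: "\<And>i j. i \<noteq> j \<Longrightarrow> R_distinct (v i) (v j)"
    and v_conv: "(\<lambda>k. integral {0..\<tau>} (\<lambda>t. (norm (v k t - v0 t))\<^sup>2)
                   + integral {0..\<tau>} (\<lambda>t. (norm (vector_derivative (v k) (at t)
                                                 - vector_derivative v0 (at t)))\<^sup>2)) \<longlonglongrightarrow> 0"
  shows "\<exists>w1 w2. (\<forall>t. (w1 has_vector_derivative DF \<mu> (v0 t) (w1 t)) (at t)) \<and>
           (\<forall>t. w1 (t + \<tau>) = M (w1 t)) \<and>
           (\<forall>t. (w2 has_vector_derivative DF \<mu> (v0 t) (w2 t)) (at t)) \<and>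
           (\<forall>t. w2 (t + \<tau>) = M (w2 t)) \<and>
           (\<forall>a b :: real. (\<forall>t. a *\<^sub>R w1 t + b *\<^sub>R w2 t = 0) \<longrightarrow> a = 0 \<and> b = 0)"
proof -
  have "continuous_on UNIV v0"
    using v0_sol[OF \<open>\<mu> \<in> \<Lambda>\<close>]
    by (auto intro!: continuous_at_imp_continuous_on has_vector_derivative_continuous)
  then obtain R where R: "\<And>t. norm (v0 t) \<le> R"
    using quasi_periodic_bounded[of M \<tau> v0, OF M \<tau> v0_per continuous_on_subset[OF _ subset_UNIV]]
    by blast
  have field_cont: "continuous_on UNIV (\<lambda>t. F l (y t))"
    if "l \<in> \<Lambda>" and "\<And>t. (y has_vector_derivative F l (y t)) (at t)" for l y
    using isCont_o2[OF has_vector_derivative_continuous[OF that(2)]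
        has_derivative_continuous[OF F[OF that(1)]]]
    by (intro continuous_at_imp_continuous_on) auto
  obtain e where "e \<longlonglongrightarrow> 0" and close: "\<And>k t. norm (v k t - v0 t) \<le> e k"
    using W12_convergence_imp_uniform_convergence[OF M \<tau> v_sol _ v_per v0_sol[OF \<open>\<mu> \<in> \<Lambda>\<close>] _
        v0_per v_conv] field_cont lam_in v_sol v0_sol \<open>\<mu> \<in> \<Lambda>\<close> by blast
  have \<xi>: "F \<mu> (v0 0) \<noteq> 0"
    using nonconstant_solution_field_nonzero[OF F[OF \<open>\<mu> \<in> \<Lambda>\<close>]
        continuous_on_Times_slice[OF DF \<open>\<mu> \<in> \<Lambda>\<close>] v0_sol[OF \<open>\<mu> \<in> \<Lambda>\<close>] R v0_nonconst] .
  obtain w where w: "\<And>t. (w has_vector_derivative DF \<mu> (v0 t) (w t)) (at t)"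
    "\<And>t. w (t + \<tau>) = M (w t)" "w 0 \<noteq> 0" "w 0 \<bullet> F \<mu> (v0 0) = 0"
  proof (rule bifurcation_yields_linearized_solution[OF M \<tau> \<Lambda> lam_in lam F DF v0_sol v0_per R
        v_sol v_per v_distinct close \<open>e \<longlonglongrightarrow> 0\<close> \<xi>])
    fix w assume "\<And>t. (w has_vector_derivative DF \<mu> (v0 t) (w t)) (at t)"
      "\<And>t. w (t + \<tau>) = M (w t)" "w 0 \<noteq> 0" "w 0 \<bullet> F \<mu> (v0 0) = 0"
    then show thesis by (rule that)
  qed
  define w1 where "w1 t = F \<mu> (v0 t)" for t
  have w1_der: "(w1 has_vector_derivative DF \<mu> (v0 t) (w1 t)) (at t)" for t
    unfolding w1_def
    by (rule solution_derivative_solves_variational_equation[OF F[OF \<open>\<mu> \<in> \<Lambda>\<close>] v0_sol[OF \<open>\<mu> \<in> \<Lambda>\<close>]])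
  have w1_per: "w1 (t + \<tau>) = M (w1 t)" for t
    unfolding w1_def
    by (rule quasi_periodic_vector_derivative[OF orthogonal_transformation_linear[OF M]
        v0_sol[OF \<open>\<mu> \<in> \<Lambda>\<close>] v0_per])
  have indep: "a = 0 \<and> b = 0" if "\<forall>t. a *\<^sub>R w1 t + b *\<^sub>R w t = 0" for a b
  proof -
    have "(a *\<^sub>R w1 0 + b *\<^sub>R w 0) \<bullet> w1 0 = 0" using that by simp
    then have "a = 0"
      using w(4) \<xi> unfolding w1_def by (simp add: inner_add_left inner_commute[of "w 0"])
    then show ?thesis using that w(3) by auto
  qed
  show ?thesis
    by (rule exI[of _ w1], rule exI[of _ w]) (use w1_der w1_per w(1,2) indep in blast)
qed

lemma bounded_linear_Jsymp: "bounded_linear Jsymp"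
  by (rule bounded_linearI') (auto simp: Jsymp_def)

definition Jsymp_blinfun :: "((real^'n) \<times> (real^'n)) \<Rightarrow>\<^sub>L ((real^'n) \<times> (real^'n))" where
  "Jsymp_blinfun = Blinfun Jsymp"

lemma blinfun_apply_Jsymp_blinfun [simp]: "blinfun_apply Jsymp_blinfun = Jsymp"
  unfolding Jsymp_blinfun_def using bounded_linear_Jsymp by (rule bounded_linear_Blinfun_apply)

theorem theorem5p5:
  fixes \<tau> \<mu> :: real
    and M :: "((real^'n) \<times> (real^'n)) \<Rightarrow> ((real^'n) \<times> (real^'n))"
    and \<Lambda> :: "real set"
    and H :: "real \<Rightarrow> ((real^'n) \<times> (real^'n)) \<Rightarrow> real"
    and gradH :: "real \<Rightarrow> ((real^'n) \<times> (real^'n)) \<Rightarrow> ((real^'n) \<times> (real^'n))"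
    and hessH :: "real \<Rightarrow> ((real^'n) \<times> (real^'n)) \<Rightarrow> (((real^'n) \<times> (real^'n)) \<Rightarrow>\<^sub>L ((real^'n) \<times> (real^'n)))"
    and v0 :: "real \<Rightarrow> ((real^'n) \<times> (real^'n))"
    and lam :: "nat \<Rightarrow> real"
    and v :: "nat \<Rightarrow> real \<Rightarrow> ((real^'n) \<times> (real^'n))"
  assumes tau_pos: "\<tau> > 0"
    and M_symp: "symplectic M"
    and M_orth: "orthogonal_transformation M"
    and Lambda_int: "is_interval \<Lambda>" "open \<Lambda>" "\<Lambda> \<noteq> {}"
    and H_cont: "continuous_on (\<Lambda> \<times> UNIV) (\<lambda>(l, z). H l z)"
    and H_inv: "\<And>l z. l \<in> \<Lambda> \<Longrightarrow> H l (M z) = H l z"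
    and H_grad: "\<And>l z. l \<in> \<Lambda> \<Longrightarrow> (H l has_derivative (\<lambda>h. gradH l z \<bullet> h)) (at z)"
    and H_hess: "\<And>l z. l \<in> \<Lambda> \<Longrightarrow> (gradH l has_derivative blinfun_apply (hessH l z)) (at z)"
    and grad_cont: "continuous_on (\<Lambda> \<times> UNIV) (\<lambda>(l, z). gradH l z)"
    and hess_cont: "continuous_on (\<Lambda> \<times> UNIV) (\<lambda>(l, z). hessH l z)"
    and v0_nonconst: "\<exists>s t. v0 s \<noteq> v0 t"
    and v0_sol: "\<And>l t. l \<in> \<Lambda> \<Longrightarrow> (v0 has_vector_derivative Jsymp (gradH l (v0 t))) (at t)"
    and v0_per: "\<And>t. v0 (t + \<tau>) = M (v0 t)"
    and mu_in: "\<mu> \<in> \<Lambda>"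
    and lam_in: "\<And>k. lam k \<in> \<Lambda>"
    and lam_lim: "lam \<longlonglongrightarrow> \<mu>"
    and v_sol: "\<And>k t. (v k has_vector_derivative Jsymp (gradH (lam k) (v k t))) (at t)"
    and v_per: "\<And>k t. v k (t + \<tau>) = M (v k t)"
    and v_distinct: "\<And>i j. i \<noteq> j \<Longrightarrow> R_distinct (v i) (v j)"
    and v_conv: "(\<lambda>k. integral {0..\<tau>} (\<lambda>t. (norm (v k t - v0 t))\<^sup>2)
                   + integral {0..\<tau>} (\<lambda>t. (norm (vector_derivative (v k) (at t)
                                                 - vector_derivative v0 (at t)))\<^sup>2))
                 \<longlonglongrightarrow> 0"
  shows "\<exists>w1 w2 :: real \<Rightarrow> ((real^'n) \<times> (real^'n)).
           (\<forall>t. (w1 has_vector_derivative Jsymp (hessH \<mu> (v0 t) (w1 t))) (at t)) \<and>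
           (\<forall>t. w1 (t + \<tau>) = M (w1 t)) \<and>
           (\<forall>t. (w2 has_vector_derivative Jsymp (hessH \<mu> (v0 t) (w2 t))) (at t)) \<and>
           (\<forall>t. w2 (t + \<tau>) = M (w2 t)) \<and>
           (\<forall>a b :: real. (\<forall>t. a *\<^sub>R w1 t + b *\<^sub>R w2 t = 0) \<longrightarrow> a = 0 \<and> b = 0)"
proof -
  define F where "F l x = Jsymp (gradH l x)" for l x
  define DF where "DF l x = Jsymp_blinfun o\<^sub>L hessH l x" for l x
  have "(F l has_derivative blinfun_apply (DF l x)) (at x)" if "l \<in> \<Lambda>" for l x
  proof -
    have "blinfun_apply (DF l x) = (\<lambda>h. Jsymp (hessH l x h))"
      unfolding DF_def by (simp add: fun_eq_iff)
    then show ?thesis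
      using bounded_linear.has_derivative[OF bounded_linear_Jsymp H_hess[OF that, of x]]
      unfolding F_def by simp
  qed
  moreover have "continuous_on (\<Lambda> \<times> UNIV) (\<lambda>(l, x). DF l x)"
    using bounded_linear.continuous_on[OF bounded_bilinear.bounded_linear_right[OF
          bounded_bilinear_blinfun_compose] hess_cont]
    unfolding DF_def by (simp add: case_prod_unfold)
  ultimately show ?thesis
    using bifurcation_degenerate_linearization[where F = F and DF = DF, OF M_orth tau_pos
        Lambda_int(2) mu_in lam_in lam_lim _ _ v0_nonconst _ v0_per _ v_per v_distinct v_conv]
      v0_sol v_sol unfolding F_def DF_def by simp
qed

end
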